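(* Let $p$ be prime and $H\le\mathrm{S}_n$ be in $\mathfrak{InP}(\mathrm{C}_p)$, with $B$, $\gamma$, $M$ and the standard generators as in the context. Let $b\in N_B(H)$ and let $x,y$ be standard generators of $H$ whose supports are not disjoint. Then there exists $a\in\mathbb{F}_p^*$ such that $x^b=x^a$ and $y^b=y^a$.
   Context: $H\le\mathrm{S}_{n}$, $n=pk$, has orbits $\Omega_1,\dots,\Omega_k$ of size $p$ with each $G_i:=H|_{\Omega_i}$ cyclic of order $p$; $|H|=p^s$ and the orbits are ordered so that $|H|_{\Omega_1\cup\dots\cup\Omega_s}|=p^s$. $G=G_1\times\dots\times G_k$, $g_i$ generates $G_i$ (chosen as conjugates of $g_1$ via bijections witnessing permutation isomorphisms $G_1\to G_i$), and $\gamma:G\to\mathbb{F}_p^k$ is $\gamma(g_1^{r_1}\cdots g_k^{r_k})=(r_1,\dots,r_k)$, with $\mathbb{F}_p$ identified with $\{0,\dots,p-1\}$. $B=\langle N_{\mathrm{Sym}(\Omega_i)}(G_i)\rangle$. $M\in\mathrm{M}(s,k,p)$ is the generator matrix of $\gamma(H)$ in standard form (its first $s$ columns form the identity $I_s$), and the standard generators of $H$ are $x_i=\gamma^{-1}(M_{i,*})$, $1\le i\le s$, where $M_{i,*}$ is the $i$-th row. The support of a permutation is its set of moved points. *)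

theory Defs
  imports "HOL-Combinatorics.Permutations" "HOL-Computational_Algebra.Primes"
begin

(* Permutations of nat are total functions; a permutation of a set A is one that
   "permutes A" (bijective, identity outside A). Composition f \<circ> g means "first g then f". *)

definition perm_orbit :: "(nat \<Rightarrow> nat) set \<Rightarrow> nat \<Rightarrow> nat set" where
  "perm_orbit H z = {h z | h. h \<in> H}"

definition restr_perm :: "(nat \<Rightarrow> nat) \<Rightarrow> nat set \<Rightarrow> (nat \<Rightarrow> nat)" where
  "restr_perm h A = (\<lambda>z. if z \<in> A then h z else z)"

definition restr_group :: "(nat \<Rightarrow> nat) set \<Rightarrow> nat set \<Rightarrow> (nat \<Rightarrow> nat) set" where
  "restr_group H A = (\<lambda>h. restr_perm h A) ` H"

(* conjugation x^b = b^{-1} x b in right-action notation, i.e. b \<circ> x \<circ> inv b as functions *)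
definition conjp :: "(nat \<Rightarrow> nat) \<Rightarrow> (nat \<Rightarrow> nat) \<Rightarrow> (nat \<Rightarrow> nat)" where
  "conjp x b = b \<circ> x \<circ> inv b"

definition sym_normalizer :: "nat set \<Rightarrow> (nat \<Rightarrow> nat) set \<Rightarrow> (nat \<Rightarrow> nat) set" where
  "sym_normalizer A K = {\<sigma>. \<sigma> permutes A \<and> (\<lambda>\<tau>. conjp \<tau> \<sigma>) ` K = K}"

inductive_set perm_gen :: "(nat \<Rightarrow> nat) set \<Rightarrow> (nat \<Rightarrow> nat) set" for S where
  gen_id: "id \<in> perm_gen S"
| gen_mult: "s \<in> S \<Longrightarrow> f \<in> perm_gen S \<Longrightarrow> s \<circ> f \<in> perm_gen S"
| gen_inv: "s \<in> S \<Longrightarrow> f \<in> perm_gen S \<Longrightarrow> inv s \<circ> f \<in> perm_gen S"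

definition Bgroup :: "(nat \<Rightarrow> nat) set \<Rightarrow> (nat \<Rightarrow> nat set) \<Rightarrow> nat \<Rightarrow> (nat \<Rightarrow> nat) set" where
  "Bgroup H \<Omega> k = perm_gen (\<Union>i<k. sym_normalizer (\<Omega> i) (restr_group H (\<Omega> i)))"

definition normalizer_in :: "(nat \<Rightarrow> nat) set \<Rightarrow> (nat \<Rightarrow> nat) set \<Rightarrow> (nat \<Rightarrow> nat) set" where
  "normalizer_in B H = {b \<in> B. (\<lambda>h. conjp h b) ` H = H}"

(* vectors of F_p^k, F_p identified with {0..<p}; coordinates \<ge> k are 0 *)
definition Fvecs :: "nat \<Rightarrow> nat \<Rightarrow> (nat \<Rightarrow> nat) set" where
  "Fvecs p k = {v. (\<forall>j<k. v j < p) \<and> (\<forall>j\<ge>k. v j = 0)}"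

(* \<gamma>^{-1}(r_1,...,r_k) = g_1^{r_1} \<cdots> g_k^{r_k} *)
definition gamma_inv :: "(nat \<Rightarrow> nat \<Rightarrow> nat) \<Rightarrow> nat \<Rightarrow> (nat \<Rightarrow> nat) \<Rightarrow> (nat \<Rightarrow> nat)" where
  "gamma_inv g k v = foldr (\<lambda>j f. (g j ^^ v j) \<circ> f) [0..<k] id"

definition gamma_image :: "(nat \<Rightarrow> nat \<Rightarrow> nat) \<Rightarrow> nat \<Rightarrow> nat \<Rightarrow> (nat \<Rightarrow> nat) set \<Rightarrow> (nat \<Rightarrow> nat) set" where
  "gamma_image g p k H = {v \<in> Fvecs p k. gamma_inv g k v \<in> H}"

definition row_space :: "nat \<Rightarrow> nat \<Rightarrow> nat \<Rightarrow> (nat \<Rightarrow> nat \<Rightarrow> nat) \<Rightarrow> (nat \<Rightarrow> nat) set" where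
  "row_space p s k M = {(\<lambda>j. if j < k then (\<Sum>i<s. c i * M i j) mod p else 0) | c. \<forall>i<s. c i < p}"

definition std_gen_matrix :: "nat \<Rightarrow> nat \<Rightarrow> nat \<Rightarrow> (nat \<Rightarrow> nat \<Rightarrow> nat) \<Rightarrow> (nat \<Rightarrow> nat) set \<Rightarrow> bool" where
  "std_gen_matrix p s k M C \<longleftrightarrow>
     (\<forall>i<s. \<forall>j<k. M i j < p) \<and>
     (\<forall>i<s. \<forall>j<s. M i j = (if i = j then 1 else 0)) \<and>
     row_space p s k M = C"

definition mrow :: "nat \<Rightarrow> (nat \<Rightarrow> nat \<Rightarrow> nat) \<Rightarrow> nat \<Rightarrow> (nat \<Rightarrow> nat)" where
  "mrow k M i = (\<lambda>j. if j < k then M i j else 0)"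

definition supp :: "(nat \<Rightarrow> nat) \<Rightarrow> nat set" where
  "supp x = {z. x z \<noteq> z}"

end

theory Submission
  imports Defs "HOL-Number_Theory.Cong"
begin

(* Every element b of B maps each orbit \<Omega> j onto itself and normalises the cyclic group generated
   by g j there, so b g_j b^-1 = g_j^(A j) on \<Omega> j for some exponent A j: this holds for the
   generators of B and is preserved by products. A standard generator x_i acts on \<Omega> l as
   g_l^(M i l), hence x_i^b acts there as g_l^(A l * M i l). Both x_i^b and x_i^(A i) lie in H and
   agree on the first s orbits, where M is the identity; since |H| = |H restricted to these orbits|,
   they are equal. Comparing them on every orbit gives A l * M i l = A i * M i l (mod p). On an orbit
   containing a common moved point of x_i and x_i', both M i l and M i' l are units mod p, so
   A i = A l = A i' (mod p). *)

lemma funpow_fixpoint: "f z = z \<Longrightarrow> (f ^^ m) z = z"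
  by (induction m) auto

lemma funpow_in_invariant: "(\<And>z. z \<in> A \<Longrightarrow> f z \<in> A) \<Longrightarrow> z \<in> A \<Longrightarrow> (f ^^ m) z \<in> A"
  by (induction m) auto

lemma funpow_agree_on_invariant:
  assumes "\<And>z. z \<in> A \<Longrightarrow> f z = q z" "\<And>z. z \<in> A \<Longrightarrow> q z \<in> A" "z \<in> A"
  shows "(f ^^ m) z = (q ^^ m) z"
  by (induction m) (simp_all add: assms funpow_in_invariant)

lemma funpow_intertwine:
  assumes "\<And>z. z \<in> A \<Longrightarrow> q z \<in> A" "\<And>z. z \<in> A \<Longrightarrow> b (q z) = (q ^^ a) (b z)" "z \<in> A"
  shows "b ((q ^^ m) z) = (q ^^ (a * m)) (b z)"
proof (induction m)
  case (Suc m)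
  have "b ((q ^^ Suc m) z) = (q ^^ a) (b ((q ^^ m) z))"
    using assms funpow_in_invariant[of A q] by simp
  also have "\<dots> = (q ^^ (a + a * m)) (b z)"
    by (simp add: Suc.IH funpow_add)
  finally show ?case by simp
qed simp

lemma funpow_order_eq_id:
  assumes "inj f" "inj_on (\<lambda>r. f ^^ r) {..<p}" "f ^^ p \<in> (\<lambda>r. f ^^ r) ` {..<p}"
  shows "f ^^ p = id"
proof -
  obtain r where r: "r < p" "f ^^ p = f ^^ r" using assms(3) by auto
  have "f ^^ r \<circ> f ^^ (p - r) = f ^^ r \<circ> id"
    using r by (simp add: funpow_add[symmetric])
  then have id: "f ^^ (p - r) = id"
    using inj_fn[OF assms(1), of r] by (simp add: fun_eq_iff inj_def)
  have "r = 0"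
  proof (rule ccontr)
    assume "r \<noteq> 0"
    then have "p - r = 0"
      using inj_onD[OF assms(2), of "p - r" 0] id r by auto
    then show False using r by simp
  qed
  then show ?thesis using r by simp
qed

lemma funpow_eq_iff_cong:
  assumes "f ^^ p = id" "inj_on (\<lambda>r. f ^^ r) {..<p}" "0 < p"
  shows "f ^^ m1 = f ^^ m2 \<longleftrightarrow> [m1 = m2] (mod p)"
proof -
  have reduce: "f ^^ m = f ^^ (m mod p)" for m
    using funpow_mod_eq[where f = f and n = p and m = m] assms(1) by (simp add: fun_eq_iff)
  have "f ^^ (m1 mod p) = f ^^ (m2 mod p) \<longleftrightarrow> m1 mod p = m2 mod p"
    using inj_onD[OF assms(2)] assms(3) by auto
  then show ?thesis using reduce cong_def by metis
qed

lemma restr_perm_funpow: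
  assumes "\<And>z. z \<in> A \<Longrightarrow> h z \<in> A"
  shows "restr_perm (h ^^ m) A = restr_perm h A ^^ m"
proof
  fix z
  show "restr_perm (h ^^ m) A z = (restr_perm h A ^^ m) z"
  proof (cases "z \<in> A")
    case True
    then show ?thesis
      using funpow_agree_on_invariant[of A "restr_perm h A" h z m] assms
      by (simp add: restr_perm_def)
  qed (simp add: restr_perm_def funpow_fixpoint)
qed

lemma inj_restr_perm:
  assumes "inj h" "\<And>z. z \<in> A \<Longrightarrow> h z \<in> A"
  shows "inj (restr_perm h A)"
proof (rule injI)
  fix x y assume "restr_perm h A x = restr_perm h A y"
  then show "x = y"
    using assms injD[OF assms(1)] unfolding restr_perm_def by (cases "x \<in> A"; cases "y \<in> A") auto
qed

lemma restr_group_card_eq_imp_eq: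
  assumes "finite H" "card (restr_group H U) = card H"
    and "h1 \<in> H" "h2 \<in> H" "\<And>z. z \<in> U \<Longrightarrow> h1 z = h2 z"
  shows "h1 = h2"
proof -
  have "inj_on (\<lambda>h. restr_perm h U) H"
    using assms(1,2) inj_on_iff_eq_card unfolding restr_group_def by blast
  moreover have "restr_perm h1 U = restr_perm h2 U"
    using assms(5) by (auto simp: restr_perm_def)
  ultimately show ?thesis using assms(3,4) by (meson inj_onD)
qed

lemma foldr_comp_apply_disjoint:
  assumes "distinct L"
    and "\<And>m z. m \<in> set L \<Longrightarrow> z \<notin> \<Omega> m \<Longrightarrow> q m z = z"
    and "\<And>m z. m \<in> set L \<Longrightarrow> z \<in> \<Omega> m \<Longrightarrow> q m z \<in> \<Omega> m"
    and "\<And>m. m \<in> set L \<Longrightarrow> m \<noteq> j \<Longrightarrow> \<Omega> m \<inter> \<Omega> j = {}"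
    and "z \<in> \<Omega> j"
  shows "foldr (\<lambda>m f. q m \<circ> f) L id z = (if j \<in> set L then q j z else z)"
  using assms
proof (induction L)
  case (Cons m L)
  let ?F = "foldr (\<lambda>m f. q m \<circ> f) L id"
  have step: "foldr (\<lambda>m f. q m \<circ> f) (m # L) id z = q m (?F z)" by simp
  have IH: "?F z = (if j \<in> set L then q j z else z)"
    using Cons by (metis distinct.simps(2) list.set_intros(2))
  show ?case
  proof (cases "m = j")
    case True
    then have "?F z = z" using IH Cons.prems(1) by simp
    then show ?thesis unfolding step using True by simp
  next
    case False
    then have "?F z \<notin> \<Omega> m"
      using IH Cons.prems(3,4,5) by (auto split: if_splits)
    then have "q m (?F z) = ?F z"
      using Cons.prems(2) by simp
    then show ?thesis unfolding step IH using False by simp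
  qed
qed simp

lemma conjp_conjp_inv:
  assumes "bij \<sigma>"
  shows "conjp (conjp \<tau> \<sigma>) (inv \<sigma>) = \<tau>"
  using assms by (simp add: conjp_def fun_eq_iff inv_inv_eq bij_is_inj)

lemma sym_normalizer_inv:
  assumes "\<sigma> \<in> sym_normalizer A K"
  shows "inv \<sigma> \<in> sym_normalizer A K"
proof -
  have perm: "\<sigma> permutes A" and K: "(\<lambda>\<tau>. conjp \<tau> \<sigma>) ` K = K"
    using assms by (auto simp: sym_normalizer_def)
  have "(\<lambda>\<tau>. conjp \<tau> (inv \<sigma>)) ` K = (\<lambda>\<tau>. conjp (conjp \<tau> \<sigma>) (inv \<sigma>)) ` K"
    by (subst (1) K[symmetric]) (simp add: image_comp comp_def)
  also have "\<dots> = K"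
    using conjp_conjp_inv[OF permutes_bij[OF perm]] by simp
  finally show ?thesis
    using permutes_inv[OF perm] by (simp add: sym_normalizer_def)
qed

lemma mrow_in_row_space:
  assumes "i < s" "1 < p" "\<forall>j<k. M i j < p"
  shows "mrow k M i \<in> row_space p s k M"
proof -
  define c :: "nat \<Rightarrow> nat" where "c i' = (if i' = i then 1 else 0)" for i'
  have "(\<Sum>i'<s. c i' * M i' j) = (\<Sum>i'<s. if i' = i then M i j else 0)" for j
    by (rule sum.cong) (simp_all add: c_def)
  then have "(\<Sum>i'<s. c i' * M i' j) = M i j" for j
    using assms(1) by simp
  then have "mrow k M i = (\<lambda>j. if j < k then (\<Sum>i'<s. c i' * M i' j) mod p else 0)"
    using assms(3) by (simp add: mrow_def fun_eq_iff)
  moreover have "\<forall>i'<s. c i' < p"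
    using assms(2) by (simp add: c_def)
  ultimately show ?thesis
    unfolding row_space_def by blast
qed

definition normalizes_blocks ::
    "nat \<Rightarrow> (nat \<Rightarrow> nat set) \<Rightarrow> (nat \<Rightarrow> nat \<Rightarrow> nat) \<Rightarrow> (nat \<Rightarrow> nat) \<Rightarrow> bool" where
  "normalizes_blocks k \<Omega> g b \<longleftrightarrow> inj b \<and> (\<forall>j<k. b ` \<Omega> j = \<Omega> j) \<and>
     (\<exists>A. \<forall>j<k. \<forall>z\<in>\<Omega> j. b (g j z) = (g j ^^ A j) (b z))"

lemma normalizes_blocks_comp:
  assumes "\<And>j z. j < k \<Longrightarrow> z \<in> \<Omega> j \<Longrightarrow> g j z \<in> \<Omega> j"
    and "normalizes_blocks k \<Omega> g b" "normalizes_blocks k \<Omega> g c"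
  shows "normalizes_blocks k \<Omega> g (b \<circ> c)"
proof -
  obtain A where A: "\<And>j z. j < k \<Longrightarrow> z \<in> \<Omega> j \<Longrightarrow> b (g j z) = (g j ^^ A j) (b z)"
    using assms(2) unfolding normalizes_blocks_def by blast
  obtain C where C: "\<And>j z. j < k \<Longrightarrow> z \<in> \<Omega> j \<Longrightarrow> c (g j z) = (g j ^^ C j) (c z)"
    using assms(3) unfolding normalizes_blocks_def by blast
  have c_block: "\<And>j. j < k \<Longrightarrow> c ` \<Omega> j = \<Omega> j"
    using assms(3) unfolding normalizes_blocks_def by blast
  have "\<forall>j<k. \<forall>z\<in>\<Omega> j. (b \<circ> c) (g j z) = (g j ^^ (A j * C j)) ((b \<circ> c) z)"
  proof (intro allI impI ballI)
    fix j z assume j: "j < k" and z: "z \<in> \<Omega> j"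
    have "c z \<in> \<Omega> j" using c_block[OF j] z by blast
    then show "(b \<circ> c) (g j z) = (g j ^^ (A j * C j)) ((b \<circ> c) z)"
      using C[OF j z] funpow_intertwine[of "\<Omega> j" "g j" b "A j" "c z" "C j"] assms(1) A j
      by simp
  qed
  moreover have "(b \<circ> c) ` \<Omega> j = \<Omega> j" if "j < k" for j
  proof -
    have "b ` \<Omega> j = \<Omega> j" using assms(2) that unfolding normalizes_blocks_def by blast
    then show ?thesis unfolding image_comp[symmetric] using c_block[OF that] by simp
  qed
  moreover have "inj (b \<circ> c)"
    using assms(2,3) unfolding normalizes_blocks_def by (simp add: inj_compose)
  ultimately show ?thesis
    unfolding normalizes_blocks_def by (intro conjI exI allI impI) auto
qed

lemma normalizes_blocks_perm_gen:
  assumes "\<And>j z. j < k \<Longrightarrow> z \<in> \<Omega> j \<Longrightarrow> g j z \<in> \<Omega> j"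
    and "\<And>\<sigma>. \<sigma> \<in> S \<Longrightarrow> normalizes_blocks k \<Omega> g \<sigma> \<and> normalizes_blocks k \<Omega> g (inv \<sigma>)"
    and "b \<in> perm_gen S"
  shows "normalizes_blocks k \<Omega> g b"
  using assms(3)
proof (induction rule: perm_gen.induct)
  case gen_id
  show ?case unfolding normalizes_blocks_def by (auto intro: exI[of _ "\<lambda>_. 1"])
next
  case (gen_mult \<sigma> f)
  then show ?case using normalizes_blocks_comp[of k \<Omega> g \<sigma> f] assms(1,2) by blast
next
  case (gen_inv \<sigma> f)
  then show ?case using normalizes_blocks_comp[of k \<Omega> g "inv \<sigma>" f] assms(1,2) by blast
qed

locale cyclic_blocks =
  fixes p k :: nat
    and H :: "(nat \<Rightarrow> nat) set"
    and \<Omega> :: "nat \<Rightarrow> nat set"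
    and g :: "nat \<Rightarrow> nat \<Rightarrow> nat"
  assumes prime_p: "prime p"
    and H_id: "id \<in> H"
    and H_comp: "h1 \<in> H \<Longrightarrow> h2 \<in> H \<Longrightarrow> h1 \<circ> h2 \<in> H"
    and H_permutes: "h \<in> H \<Longrightarrow> h permutes (\<Union>j<k. \<Omega> j)"
    and H_maps_block: "h \<in> H \<Longrightarrow> j < k \<Longrightarrow> z \<in> \<Omega> j \<Longrightarrow> h z \<in> \<Omega> j"
    and blocks_disjoint: "i < k \<Longrightarrow> j < k \<Longrightarrow> i \<noteq> j \<Longrightarrow> \<Omega> i \<inter> \<Omega> j = {}"
    and block_group: "j < k \<Longrightarrow> restr_group H (\<Omega> j) = {g j ^^ r | r. r < p}"
    and block_group_card: "j < k \<Longrightarrow> card (restr_group H (\<Omega> j)) = p"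
begin

lemma p_gt_1: "1 < p"
  using prime_p prime_gt_1_nat by blast

lemma H_funpow: "h \<in> H \<Longrightarrow> h ^^ m \<in> H"
  by (induction m) (auto simp: H_id H_comp)

lemma g_eq_restr_perm: "j < k \<Longrightarrow> \<exists>h\<in>H. g j = restr_perm h (\<Omega> j)"
proof -
  assume j: "j < k"
  have "g j ^^ 1 \<in> {g j ^^ r | r. r < p}" using p_gt_1 by blast
  then show ?thesis using block_group[OF j] unfolding restr_group_def by auto
qed

lemma g_fixes: "j < k \<Longrightarrow> z \<notin> \<Omega> j \<Longrightarrow> g j z = z"
  using g_eq_restr_perm[of j] by (auto simp: restr_perm_def)

lemma g_maps_block: "j < k \<Longrightarrow> z \<in> \<Omega> j \<Longrightarrow> g j z \<in> \<Omega> j"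
  using g_eq_restr_perm[of j] H_maps_block by (auto simp: restr_perm_def)

lemma inj_g: "j < k \<Longrightarrow> inj (g j)"
proof -
  assume j: "j < k"
  obtain h where h: "h \<in> H" "g j = restr_perm h (\<Omega> j)" using g_eq_restr_perm[OF j] by blast
  show ?thesis
    unfolding h(2) using inj_restr_perm permutes_inj[OF H_permutes] H_maps_block h(1) j by blast
qed

lemma g_funpow_in_block_group: "j < k \<Longrightarrow> g j ^^ m \<in> restr_group H (\<Omega> j)"
proof -
  assume j: "j < k"
  obtain h where h: "h \<in> H" "g j = restr_perm h (\<Omega> j)" using g_eq_restr_perm[OF j] by blast
  then have "g j ^^ m = restr_perm (h ^^ m) (\<Omega> j)"
    using restr_perm_funpow[of "\<Omega> j" h m] H_maps_block j by simp
  then show ?thesis using H_funpow[OF h(1)] unfolding restr_group_def by blast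
qed

lemma g_funpow_eq_iff: "j < k \<Longrightarrow> g j ^^ m1 = g j ^^ m2 \<longleftrightarrow> [m1 = m2] (mod p)"
proof -
  assume j: "j < k"
  have powers: "restr_group H (\<Omega> j) = (\<lambda>r. g j ^^ r) ` {..<p}"
    using block_group[OF j] by auto
  then have "inj_on (\<lambda>r. g j ^^ r) {..<p}"
    using block_group_card[OF j] by (simp add: inj_on_iff_eq_card)
  moreover have "g j ^^ p = id"
    using funpow_order_eq_id[OF inj_g[OF j] calculation] g_funpow_in_block_group[OF j] powers
    by simp
  ultimately show ?thesis using funpow_eq_iff_cong[where f = "g j" and p = p] p_gt_1 by simp
qed

lemma g_funpow_eqI:
  assumes "j < k" "\<And>z. z \<in> \<Omega> j \<Longrightarrow> (g j ^^ m1) z = (g j ^^ m2) z"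
  shows "g j ^^ m1 = g j ^^ m2"
proof
  fix z
  show "(g j ^^ m1) z = (g j ^^ m2) z"
    using assms g_fixes[OF assms(1)] funpow_fixpoint[of "g j" z] by (cases "z \<in> \<Omega> j") auto
qed

lemma gamma_inv_apply:
  assumes "l < k" "z \<in> \<Omega> l"
  shows "gamma_inv g k v z = (g l ^^ v l) z"
proof -
  have "foldr (\<lambda>m f. (g m ^^ v m) \<circ> f) [0..<k] id z
      = (if l \<in> set [0..<k] then (g l ^^ v l) z else z)"
  proof (rule foldr_comp_apply_disjoint)
    fix m z assume "m \<in> set [0..<k]"
    then have m: "m < k" by simp
    show "z \<notin> \<Omega> m \<Longrightarrow> (g m ^^ v m) z = z"
      using g_fixes[OF m] funpow_fixpoint by metis
    show "z \<in> \<Omega> m \<Longrightarrow> (g m ^^ v m) z \<in> \<Omega> m"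
      using g_maps_block[OF m] funpow_in_invariant by metis
  qed (use assms blocks_disjoint in auto)
  then show ?thesis using assms(1) unfolding gamma_inv_def by simp
qed

lemma gamma_inv_funpow_apply:
  assumes "l < k" "z \<in> \<Omega> l"
  shows "(gamma_inv g k v ^^ m) z = (g l ^^ (v l * m)) z"
proof -
  have "(gamma_inv g k v ^^ m) z = ((g l ^^ v l) ^^ m) z"
    using funpow_agree_on_invariant[of "\<Omega> l" "gamma_inv g k v" "g l ^^ v l" z m]
      gamma_inv_apply funpow_in_invariant[of "\<Omega> l" "g l"] g_maps_block assms
    by blast
  then show ?thesis by (simp add: funpow_mult)
qed

lemma sym_normalizer_normalizes_blocks:
  assumes i: "i < k" and \<sigma>: "\<sigma> \<in> sym_normalizer (\<Omega> i) (restr_group H (\<Omega> i))"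
  shows "normalizes_blocks k \<Omega> g \<sigma>"
proof -
  have perm: "\<sigma> permutes \<Omega> i"
    and norm: "(\<lambda>\<tau>. conjp \<tau> \<sigma>) ` restr_group H (\<Omega> i) = restr_group H (\<Omega> i)"
    using \<sigma> by (auto simp: sym_normalizer_def)
  have "conjp (g i) \<sigma> \<in> restr_group H (\<Omega> i)"
    using imageI[OF g_funpow_in_block_group[OF i, of 1], of "\<lambda>\<tau>. conjp \<tau> \<sigma>"] norm by simp
  then obtain r where r: "conjp (g i) \<sigma> = g i ^^ r"
    using block_group[OF i] by blast
  have on_block: "\<sigma> (g i z) = (g i ^^ r) (\<sigma> z)" for z
    using fun_cong[OF r, of "\<sigma> z"] permutes_inverses(2)[OF perm] by (simp add: conjp_def)
  have off_block: "\<sigma> z = z" if "j < k" "j \<noteq> i" "z \<in> \<Omega> j" for j z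
  proof -
    have "z \<notin> \<Omega> i" using blocks_disjoint[OF i that(1)] that(2,3) by auto
    then show ?thesis by (rule permutes_not_in[OF perm])
  qed
  define A where "A j = (if j = i then r else 1)" for j
  have "\<forall>j<k. \<forall>z\<in>\<Omega> j. \<sigma> (g j z) = (g j ^^ A j) (\<sigma> z)"
    using on_block off_block g_maps_block by (simp add: A_def)
  moreover have "\<sigma> ` \<Omega> j = \<Omega> j" if "j < k" for j
  proof (cases "j = i")
    case False
    then have "\<sigma> ` \<Omega> j = id ` \<Omega> j"
      using off_block[OF that] by (intro image_cong) auto
    then show ?thesis by simp
  qed (use permutes_image[OF perm] in simp)
  ultimately show ?thesis
    unfolding normalizes_blocks_def using permutes_inj[OF perm] by blast
qed

lemma Bgroup_normalizes_blocks: "b \<in> Bgroup H \<Omega> k \<Longrightarrow> normalizes_blocks k \<Omega> g b"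
  unfolding Bgroup_def
  by (rule normalizes_blocks_perm_gen)
    (use g_maps_block sym_normalizer_normalizes_blocks sym_normalizer_inv in auto)

lemma conjp_apply_on_block:
  assumes b: "normalizes_blocks k \<Omega> g b" and l: "l < k"
    and a: "\<And>z. z \<in> \<Omega> l \<Longrightarrow> b (g l z) = (g l ^^ a) (b z)"
    and f: "\<And>z. z \<in> \<Omega> l \<Longrightarrow> f z = (g l ^^ m) z"
    and w: "w \<in> \<Omega> l"
  shows "conjp f b w = (g l ^^ (a * m)) w"
proof -
  obtain z where z: "z \<in> \<Omega> l" "w = b z"
    using b l w unfolding normalizes_blocks_def by blast
  have "conjp f b w = b ((g l ^^ m) z)"
    using b z f unfolding normalizes_blocks_def conjp_def by simp
  also have "\<dots> = (g l ^^ (a * m)) w"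
    using funpow_intertwine[of "\<Omega> l" "g l" b a z m] g_maps_block[OF l] a z by simp
  finally show ?thesis .
qed

lemma normalizes_blocks_exponent_not_dvd:
  assumes b: "normalizes_blocks k \<Omega> g b" and j: "j < k"
    and a: "\<And>z. z \<in> \<Omega> j \<Longrightarrow> b (g j z) = (g j ^^ a) (b z)"
  shows "\<not> p dvd a"
proof
  assume "p dvd a"
  then have "g j ^^ a = g j ^^ 0"
    using g_funpow_eq_iff[OF j, of a 0] by (simp add: cong_0_iff)
  then have "b (g j z) = b z" if "z \<in> \<Omega> j" for z
    using a that by simp
  then have "(g j ^^ 1) z = (g j ^^ 0) z" if "z \<in> \<Omega> j" for z
    using b that unfolding normalizes_blocks_def by (simp add: inj_eq)
  then have "g j ^^ 1 = g j ^^ 0"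
    by (rule g_funpow_eqI[OF j])
  then show False
    using g_funpow_eq_iff[OF j, of 1 0] p_gt_1 by (simp add: cong_def)
qed

lemma moved_point_in_block:
  assumes "h \<in> H" "h w \<noteq> w"
  shows "\<exists>j<k. w \<in> \<Omega> j"
proof -
  have "w \<in> (\<Union>j<k. \<Omega> j)"
    using permutes_not_in[OF H_permutes[OF assms(1)]] assms(2) by auto
  then show ?thesis by blast
qed

end

locale std_generators = cyclic_blocks +
  fixes s :: nat and M :: "nat \<Rightarrow> nat \<Rightarrow> nat"
  assumes s_le_k: "s \<le> k"
    and H_card: "card H = p ^ s"
    and H_restr_card: "card (restr_group H (\<Union>l<s. \<Omega> l)) = p ^ s"
    and M_std: "std_gen_matrix p s k M (gamma_image g p k H)"
begin

definition std_gen :: "nat \<Rightarrow> nat \<Rightarrow> nat" where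
  "std_gen i = gamma_inv g k (mrow k M i)"

lemma M_entry_less: "i < s \<Longrightarrow> j < k \<Longrightarrow> M i j < p"
  and M_identity: "i < s \<Longrightarrow> l < s \<Longrightarrow> M i l = (if i = l then 1 else 0)"
  and row_space_eq: "row_space p s k M = gamma_image g p k H"
  using M_std unfolding std_gen_matrix_def by auto

lemma std_gen_in_H: "i < s \<Longrightarrow> std_gen i \<in> H"
  using mrow_in_row_space[of i s p k M] p_gt_1 M_entry_less row_space_eq
  unfolding std_gen_def gamma_image_def by auto

lemma H_eqI:
  assumes "h1 \<in> H" "h2 \<in> H" "\<And>l z. l < s \<Longrightarrow> z \<in> \<Omega> l \<Longrightarrow> h1 z = h2 z"
  shows "h1 = h2"
proof (rule restr_group_card_eq_imp_eq[of H "\<Union>l<s. \<Omega> l"])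
  show "finite H"
    using H_card p_gt_1 card_gt_0_iff by fastforce
qed (use assms H_card H_restr_card in auto)

lemma std_gen_funpow_apply:
  "l < k \<Longrightarrow> z \<in> \<Omega> l \<Longrightarrow> (std_gen i ^^ m) z = (g l ^^ (M i l * m)) z"
  unfolding std_gen_def using gamma_inv_funpow_apply by (simp add: mrow_def)

lemma std_gen_funpow_cong:
  assumes "i < s" "[m1 = m2] (mod p)"
  shows "std_gen i ^^ m1 = std_gen i ^^ m2"
proof (rule H_eqI)
  show "std_gen i ^^ m1 \<in> H" "std_gen i ^^ m2 \<in> H"
    using H_funpow std_gen_in_H assms(1) by auto
next
  fix l z assume "l < s" and z: "z \<in> \<Omega> l"
  then have l: "l < k" using s_le_k by simp
  have "g l ^^ (M i l * m1) = g l ^^ (M i l * m2)"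
    using g_funpow_eq_iff[OF l] assms(2) cong_scalar_left by simp
  then show "(std_gen i ^^ m1) z = (std_gen i ^^ m2) z"
    using std_gen_funpow_apply[OF l z, where i = i] by simp
qed

lemma std_gen_moved_point:
  assumes "std_gen i w \<noteq> w" "l < k" "w \<in> \<Omega> l"
  shows "\<not> p dvd M i l"
proof
  assume "p dvd M i l"
  then have "g l ^^ M i l = g l ^^ 0"
    using g_funpow_eq_iff[OF assms(2), of "M i l" 0] by (simp add: cong_0_iff)
  then show False
    using std_gen_funpow_apply[OF assms(2,3), where i = i and m = 1] assms(1) by simp
qed

context
  fixes b :: "nat \<Rightarrow> nat" and A :: "nat \<Rightarrow> nat"
  assumes b_normalizer: "b \<in> normalizer_in (Bgroup H \<Omega> k) H"
    and b_exponents: "\<And>j z. j < k \<Longrightarrow> z \<in> \<Omega> j \<Longrightarrow> b (g j z) = (g j ^^ A j) (b z)"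
begin

lemma conjp_std_gen_apply:
  "l < k \<Longrightarrow> w \<in> \<Omega> l \<Longrightarrow> conjp (std_gen i) b w = (g l ^^ (A l * M i l)) w"
proof -
  assume l: "l < k" and w: "w \<in> \<Omega> l"
  have "normalizes_blocks k \<Omega> g b"
    using Bgroup_normalizes_blocks b_normalizer unfolding normalizer_in_def by blast
  then show ?thesis
  proof (rule conjp_apply_on_block[OF _ l _ _ w])
    show "b (g l z) = (g l ^^ A l) (b z)" if "z \<in> \<Omega> l" for z
      using b_exponents[OF l that] .
    show "std_gen i z = (g l ^^ M i l) z" if "z \<in> \<Omega> l" for z
      using std_gen_funpow_apply[OF l that, where i = i and m = 1] by simp
  qed
qed

lemma conjp_std_gen:
  assumes "i < s"
  shows "conjp (std_gen i) b = std_gen i ^^ A i"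
proof (rule H_eqI)
  show "conjp (std_gen i) b \<in> H"
    using b_normalizer std_gen_in_H[OF assms] unfolding normalizer_in_def by blast
  show "std_gen i ^^ A i \<in> H"
    using H_funpow std_gen_in_H[OF assms] by blast
next
  fix l z assume l: "l < s" and z: "z \<in> \<Omega> l"
  have lk: "l < k" using l s_le_k by simp
  have "A l * M i l = M i l * A i"
    using M_identity[OF assms l] by simp
  then show "conjp (std_gen i) b z = (std_gen i ^^ A i) z"
    using conjp_std_gen_apply[OF lk z, of i] std_gen_funpow_apply[OF lk z, where i = i and m = "A i"]
    by (simp only:)
qed

lemma exponent_mult_cong:
  assumes "i < s" "j < k"
  shows "[A j * M i j = A i * M i j] (mod p)"
proof -
  have "(g j ^^ (A j * M i j)) z = (g j ^^ (M i j * A i)) z" if "z \<in> \<Omega> j" for z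
    using conjp_std_gen_apply[OF assms(2) that, of i] conjp_std_gen[OF assms(1)]
      std_gen_funpow_apply[OF assms(2) that, where i = i and m = "A i"] by simp
  then have "g j ^^ (A j * M i j) = g j ^^ (M i j * A i)"
    by (rule g_funpow_eqI[OF assms(2)])
  then show ?thesis
    using g_funpow_eq_iff[OF assms(2)] by (simp add: mult.commute)
qed

lemma exponent_cong_at_moved_point:
  assumes "i < s" "std_gen i w \<noteq> w" "j < k" "w \<in> \<Omega> j"
  shows "[A i = A j] (mod p)"
proof -
  have "coprime (M i j) p"
    using std_gen_moved_point[OF assms(2-4)] prime_imp_coprime[OF prime_p] coprime_commute by blast
  then show ?thesis
    using exponent_mult_cong[OF assms(1,3)] cong_mult_rcancel_nat cong_sym by blast
qed

end

theorem normalizer_acts_on_std_gens_by_common_power: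
  assumes b: "b \<in> normalizer_in (Bgroup H \<Omega> k) H" and i: "i < s" and i': "i' < s"
    and meet: "supp (std_gen i) \<inter> supp (std_gen i') \<noteq> {}"
  shows "\<exists>a. 1 \<le> a \<and> a < p \<and> conjp (std_gen i) b = std_gen i ^^ a \<and>
             conjp (std_gen i') b = std_gen i' ^^ a"
proof -
  have b_blocks: "normalizes_blocks k \<Omega> g b"
    using Bgroup_normalizes_blocks b unfolding normalizer_in_def by blast
  then obtain A where A: "\<And>j z. j < k \<Longrightarrow> z \<in> \<Omega> j \<Longrightarrow> b (g j z) = (g j ^^ A j) (b z)"
    unfolding normalizes_blocks_def by blast
  obtain w where w: "std_gen i w \<noteq> w" "std_gen i' w \<noteq> w"
    using meet unfolding supp_def by blast
  obtain j where j: "j < k" "w \<in> \<Omega> j"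
    using moved_point_in_block[OF std_gen_in_H[OF i] w(1)] by blast
  define a where "a = A i mod p"
  have a_cong: "[A i = a] (mod p)" "[A i' = a] (mod p)"
    using exponent_cong_at_moved_point[OF b A i w(1) j] exponent_cong_at_moved_point[OF b A i' w(2) j]
    unfolding a_def cong_def by auto
  have "\<not> p dvd A i"
    using normalizes_blocks_exponent_not_dvd[OF b_blocks _ A] i s_le_k by simp
  then have "1 \<le> a" "a < p"
    using p_gt_1 unfolding a_def by (auto simp: dvd_eq_mod_eq_0)
  with a_cong show ?thesis
    using conjp_std_gen[OF b A] std_gen_funpow_cong i i' by metis
qed

end

theorem lemma4p8:
  fixes p k s n :: nat
    and H :: "(nat \<Rightarrow> nat) set"
    and \<Omega> :: "nat \<Rightarrow> nat set"
    and g :: "nat \<Rightarrow> nat \<Rightarrow> nat"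
    and M :: "nat \<Rightarrow> nat \<Rightarrow> nat"
    and b x y :: "nat \<Rightarrow> nat"
  assumes p_prime: "prime p"
    and n_def: "n = p * k"
    (* H is a subgroup of S_n = Sym({0..<n}) *)
    and H_perm: "\<forall>h\<in>H. h permutes {0..<n}"
    and H_id: "id \<in> H"
    and H_mult: "\<forall>h1\<in>H. \<forall>h2\<in>H. h1 \<circ> h2 \<in> H"
    and H_inv: "\<forall>h\<in>H. inv h \<in> H"
    (* the orbits of H are \<Omega>_0,...,\<Omega>_{k-1}, each of size p *)
    and orb_cover: "(\<Union>i<k. \<Omega> i) = {0..<n}"
    and orb_disj: "\<forall>i<k. \<forall>j<k. i \<noteq> j \<longrightarrow> \<Omega> i \<inter> \<Omega> j = {}"
    and orb_card: "\<forall>i<k. card (\<Omega> i) = p"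
    and orb_orbit: "\<forall>i<k. \<forall>z\<in>\<Omega> i. perm_orbit H z = \<Omega> i"
    (* G_i = H|_{\<Omega>_i} is cyclic of order p, generated by g_i *)
    and G_gen: "\<forall>i<k. restr_group H (\<Omega> i) = {g i ^^ r | r. r < p}"
    and G_card: "\<forall>i<k. card (restr_group H (\<Omega> i)) = p"
    (* g_i is the conjugate of g_1 via a bijection \<Omega>_1 \<rightarrow> \<Omega>_i witnessing
       a permutation isomorphism G_1 \<rightarrow> G_i *)
    and g_conj: "\<forall>i<k. \<exists>\<sigma>. bij_betw \<sigma> (\<Omega> 0) (\<Omega> i) \<and>
                    (\<forall>z\<in>\<Omega> 0. g i (\<sigma> z) = \<sigma> (g 0 z)) \<and>
                    (\<forall>h\<in>restr_group H (\<Omega> 0). \<exists>h'\<in>restr_group H (\<Omega> i).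
                        \<forall>z\<in>\<Omega> 0. h' (\<sigma> z) = \<sigma> (h z))"
    (* |H| = p^s and |H|_{\<Omega>_1 \<union> ... \<union> \<Omega>_s}| = p^s *)
    and H_card: "card H = p ^ s"
    and s_le: "s \<le> k"
    and H_first: "card (restr_group H (\<Union>i<s. \<Omega> i)) = p ^ s"
    (* M is the generator matrix of \<gamma>(H) in standard form *)
    and M_std: "std_gen_matrix p s k M (gamma_image g p k H)"
    (* b \<in> N_B(H) *)
    and b_norm: "b \<in> normalizer_in (Bgroup H \<Omega> k) H"
    (* x, y standard generators of H with non-disjoint supports *)
    and x_std: "\<exists>i<s. x = gamma_inv g k (mrow k M i)"
    and y_std: "\<exists>i<s. y = gamma_inv g k (mrow k M i)"
    and supp_meet: "supp x \<inter> supp y \<noteq> {}"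
  shows "\<exists>a. 1 \<le> a \<and> a < p \<and> conjp x b = x ^^ a \<and> conjp y b = y ^^ a"
proof -
  interpret std_generators p k H \<Omega> g s M
  proof unfold_locales
    show "h permutes (\<Union>j<k. \<Omega> j)" if "h \<in> H" for h
      using H_perm orb_cover that by simp
    show "h z \<in> \<Omega> j" if "h \<in> H" "j < k" "z \<in> \<Omega> j" for h j z
      using orb_orbit that unfolding perm_orbit_def by blast
  qed (use p_prime H_id H_mult orb_disj G_gen G_card s_le H_card H_first M_std in auto)
  obtain i i' where "i < s" "x = std_gen i" "i' < s" "y = std_gen i'"
    using x_std y_std unfolding std_gen_def by blast
  then show ?thesis
    using normalizer_acts_on_std_gens_by_common_power[OF b_norm] supp_meet by blast
qed

end
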